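(* For every integer $d\ge 200$ and every even integer $n\le 2^{\lfloor d/200\rfloor}$ there is an $(n,d,\alpha,\beta)$-sequence with $\alpha=\sqrt{2\ln(d)/n}$ and $\beta=1/16$.
   Context: Let $X$ be a set with $|X|$ even. An equitable bipartition of $X$ is a partition $(X_0,X_1)$ with $|X_0|=|X_1|$. A sequence $\mathcal B=(X_{1,0},X_{1,1}),\dots,(X_{d,0},X_{d,1})$ of equitable bipartitions of $X$ is $\alpha$-orthogonal if $|X_{i,\ell}\cap X_{j,\ell'}|\le(\frac14+\alpha)|X|$ for all $1\le i<j\le d$ and $\ell,\ell'\in\{0,1\}$; it is $\beta$-balanced if for every $x\ne y\in X$ the number of indices $i$ with $x,y\in X_{i,0}$ or $x,y\in X_{i,1}$ is at most $(\frac12+\beta)d$. It is an $(n,d,\alpha,\beta)$-sequence if $|X|=n$, $|\mathcal B|=d$, and $\mathcal B$ is both $\alpha$-orthogonal and $\beta$-balanced. *)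

theory Defs
  imports Complex_Main
begin

definition part :: "'a set \<times> 'a set \<Rightarrow> bool \<Rightarrow> 'a set" where
  "part P l = (if l then snd P else fst P)"

definition equitable_bipartition :: "'a set \<Rightarrow> 'a set \<times> 'a set \<Rightarrow> bool" where
  "equitable_bipartition X P \<longleftrightarrow>
     fst P \<union> snd P = X \<and> fst P \<inter> snd P = {} \<and> card (fst P) = card (snd P)"

text \<open>A sequence of bipartitions is a list; list index i corresponds to index i+1 in the paper.\<close>
definition alpha_orthogonal :: "'a set \<Rightarrow> ('a set \<times> 'a set) list \<Rightarrow> real \<Rightarrow> bool" where
  "alpha_orthogonal X B \<alpha> \<longleftrightarrow>
     (\<forall>i j l l'. i < j \<and> j < length B \<longrightarrow>
        real (card (part (B ! i) l \<inter> part (B ! j) l')) \<le> (1/4 + \<alpha>) * real (card X))"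

definition beta_balanced :: "'a set \<Rightarrow> ('a set \<times> 'a set) list \<Rightarrow> real \<Rightarrow> bool" where
  "beta_balanced X B \<beta> \<longleftrightarrow>
     (\<forall>x\<in>X. \<forall>y\<in>X. x \<noteq> y \<longrightarrow>
        real (card {i. i < length B \<and>
                     ((x \<in> fst (B ! i) \<and> y \<in> fst (B ! i)) \<or> (x \<in> snd (B ! i) \<and> y \<in> snd (B ! i)))})
          \<le> (1/2 + \<beta>) * real (length B))"

definition ndab_sequence ::
  "'a set \<Rightarrow> ('a set \<times> 'a set) list \<Rightarrow> nat \<Rightarrow> nat \<Rightarrow> real \<Rightarrow> real \<Rightarrow> bool" where
  "ndab_sequence X B n d \<alpha> \<beta> \<longleftrightarrow>
     finite X \<and> even (card X) \<and> card X = n \<and> length B = d \<and>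
     (\<forall>P\<in>set B. equitable_bipartition X P) \<and>
     alpha_orthogonal X B \<alpha> \<and> beta_balanced X B \<beta>"

end

theory Submission
  imports Defs "HOL-Probability.Hoeffding"
begin

text \<open>Split \<open>X = {0, ..., 2h - 1}\<close> into the \<open>h\<close> pairs \<open>{2m, 2m + 1}\<close> and let the \<open>i\<close>-th
  bipartition separate the two members of every pair, the orientation of pair \<open>m\<close> being a bit
  \<open>c (i, m)\<close>. The overlap \<open>|X\<^sub>i\<^sub>,\<^sub>l \<inter> X\<^sub>j\<^sub>,\<^sub>l\<^sub>'|\<close> counts
  the pairs on which rows \<open>i\<close> and \<open>j\<close> of \<open>c\<close> agree (or disagree), and two elements of distinct
  pairs \<open>m, m'\<close> lie together in as many bipartitions as columns \<open>m\<close> and \<open>m'\<close> of \<open>c\<close> agree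
  (or disagree). For a uniformly random bit matrix \<open>c\<close>, Hoeffding's inequality bounds the
  fraction of matrices violating a single row condition by \<open>d\<^sup>-\<^sup>8\<close> and a single column condition
  by \<open>exp (-d/128)\<close>; as there are at most \<open>2d\<^sup>2\<close> row and \<open>2h\<^sup>2\<close> column conditions and
  \<open>h \<le> 2\<^bsup>d/200\<^esup>\<close>, the union bound leaves a matrix satisfying all of them.\<close>

lemma card_subsets_above_half_le:
  fixes K :: "'a set" and \<epsilon> :: real
  assumes "finite K" and "K \<noteq> {}" and "\<epsilon> \<ge> 0"
  shows "real (card {T \<in> Pow K. real (card K) / 2 + \<epsilon> \<le> real (card T)})
           \<le> 2 ^ card K * exp (- 2 * \<epsilon>\<^sup>2 / real (card K))"
proof -
  let ?k = "card K"
  let ?large = "{T. real ?k * (1/2) + \<epsilon> \<le> real (card T)}"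
  have "binomial_pmf ?k (1/2)
          = map_pmf (\<lambda>f. card {x \<in> K. f x}) (Pi_pmf K False (\<lambda>_. bernoulli_pmf (1/2)))"
    by (rule binomial_pmf_altdef') (use assms(1) in auto)
  also have "\<dots> = map_pmf card (pmf_of_set (Pow K))"
    by (simp flip: pmf_of_set_Pow_conv_bernoulli[OF assms(1), of False] add: pmf.map_comp o_def)
  finally have "measure_pmf.prob (binomial_pmf ?k (1/2)) {x. real ?k * (1/2) + \<epsilon> \<le> real x}
                  = measure_pmf.prob (pmf_of_set (Pow K)) ?large"
    by (simp add: vimage_def)
  also have "\<dots> = real (card (Pow K \<inter> ?large)) / 2 ^ ?k"
    using assms(1) by (subst measure_pmf_of_set) (auto simp: card_Pow)
  finally have "real (card (Pow K \<inter> ?large)) / 2 ^ ?k \<le> exp (- 2 * \<epsilon>\<^sup>2 / real ?k)"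
    using binomial_distribution.prob_ge[of "1/2" ?k \<epsilon>] assms
    by (simp add: binomial_distribution_def card_gt_0_iff)
  moreover have "Pow K \<inter> ?large = {T \<in> Pow K. real ?k / 2 + \<epsilon> \<le> real (card T)}"
    by auto
  ultimately show ?thesis
    by (simp add: divide_le_eq mult.commute)
qed

text \<open>Once the values off \<open>p ` K\<close> (in particular those at \<open>q ` K\<close>) are fixed, the values at
  \<open>p ` K\<close> encode the agreement set freely.\<close>
lemma bij_betw_agreement_split:
  assumes inj: "inj_on p K" and p: "p ` K \<subseteq> A" and q: "q ` K \<subseteq> A - p ` K"
  shows "bij_betw (\<lambda>c. ({k\<in>K. c (p k) = (c (q k) = e)}, \<lambda>x. if x \<in> p ` K then False else c x))
           (PiE_dflt A False (\<lambda>_. UNIV)) (Pow K \<times> PiE_dflt (A - p ` K) False (\<lambda>_. UNIV))"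
    (is "bij_betw ?F _ _")
proof -
  define G where "G = (\<lambda>(T, g) x. if x \<in> p ` K
                          then (inv_into K p x \<in> T) = (g (q (inv_into K p x)) = e) else g x)"
  have q_off: "q k \<noteq> p k'" if "k \<in> K" "k' \<in> K" for k k'
    using q that by auto
  have G_F: "G (?F c) = c" for c
    using inj q_off by (auto simp: G_def fun_eq_iff)
  have F_G: "?F (G (T, g)) = (T, g)"
    if "T \<subseteq> K" and "g \<in> PiE_dflt (A - p ` K) False (\<lambda>_. UNIV)" for T g
  proof -
    have agree: "G (T, g) (p k) = (G (T, g) (q k) = e) \<longleftrightarrow> k \<in> T" if "k \<in> K" for k
    proof -
      have "q k \<notin> p ` K"
        using q that by auto
      then show ?thesis
        using inj that by (simp add: G_def) blast
    qed
    have "{k\<in>K. G (T, g) (p k) = (G (T, g) (q k) = e)} = T"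
      using agree \<open>T \<subseteq> K\<close> by blast
    moreover have "(\<lambda>x. if x \<in> p ` K then False else G (T, g) x) = g"
      using \<open>g \<in> _\<close> by (auto simp: G_def PiE_dflt_def)
    ultimately show ?thesis
      by simp
  qed
  show ?thesis
  proof (rule bij_betwI[of _ _ _ G])
    show "?F \<in> PiE_dflt A False (\<lambda>_. UNIV) \<rightarrow> Pow K \<times> PiE_dflt (A - p ` K) False (\<lambda>_. UNIV)"
      using p by (auto simp: PiE_dflt_def)
    show "G \<in> Pow K \<times> PiE_dflt (A - p ` K) False (\<lambda>_. UNIV) \<rightarrow> PiE_dflt A False (\<lambda>_. UNIV)"
      using p by (auto simp: G_def PiE_dflt_def)
    show "G (?F c) = c" for c
      by (rule G_F)
    show "?F (G z) = z" if "z \<in> Pow K \<times> PiE_dflt (A - p ` K) False (\<lambda>_. UNIV)" for z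
      using that F_G by (cases z) blast
  qed
qed

lemma card_agreement_filter:
  assumes "inj_on p K" and "p ` K \<subseteq> A" and "q ` K \<subseteq> A - p ` K"
  shows "card {c \<in> PiE_dflt A False (\<lambda>_. UNIV). Q {k\<in>K. c (p k) = (c (q k) = e)}}
           = card {T \<in> Pow K. Q T} * card (PiE_dflt (A - p ` K) False (\<lambda>_. UNIV :: bool set))"
proof -
  let ?U' = "PiE_dflt (A - p ` K) False (\<lambda>_. UNIV :: bool set)"
  have "bij_betw (\<lambda>c. ({k\<in>K. c (p k) = (c (q k) = e)}, \<lambda>x. if x \<in> p ` K then False else c x))
          {c \<in> PiE_dflt A False (\<lambda>_. UNIV). Q {k\<in>K. c (p k) = (c (q k) = e)}}
          {z \<in> Pow K \<times> ?U'. Q (fst z)}"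
    by (rule bij_betw_Collect[OF bij_betw_agreement_split[OF assms]]) simp
  moreover have "{z \<in> Pow K \<times> ?U'. Q (fst z)} = {T \<in> Pow K. Q T} \<times> ?U'"
    by auto
  ultimately show ?thesis
    by (simp add: bij_betw_same_card card_cartesian_product)
qed

lemma card_agreement_tail_le:
  assumes "finite K" and "K \<noteq> {}" and "inj_on p K"
    and "p ` K \<subseteq> A" and "q ` K \<subseteq> A - p ` K" and "\<epsilon> \<ge> 0"
  shows "real (card {c \<in> PiE_dflt A False (\<lambda>_. UNIV).
                       real (card K) / 2 + \<epsilon> \<le> real (card {k\<in>K. c (p k) = (c (q k) = e)})})
           \<le> real (card (PiE_dflt A False (\<lambda>_. UNIV :: bool set))) * exp (- 2 * \<epsilon>\<^sup>2 / real (card K))"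
proof -
  let ?U' = "real (card (PiE_dflt (A - p ` K) False (\<lambda>_. UNIV :: bool set)))"
  have total: "card (PiE_dflt A False (\<lambda>_. UNIV :: bool set))
                 = 2 ^ card K * card (PiE_dflt (A - p ` K) False (\<lambda>_. UNIV :: bool set))"
    using card_agreement_filter[OF assms(3-5), of "\<lambda>_. True" e] card_Pow[OF assms(1)]
    by (simp add: Pow_def)
  have "real (card {c \<in> PiE_dflt A False (\<lambda>_. UNIV).
                       real (card K) / 2 + \<epsilon> \<le> real (card {k\<in>K. c (p k) = (c (q k) = e)})})
          = real (card {T \<in> Pow K. real (card K) / 2 + \<epsilon> \<le> real (card T)}) * ?U'"
    using card_agreement_filter[OF assms(3-5), of "\<lambda>T. real (card K) / 2 + \<epsilon> \<le> real (card T)" e]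
    by simp
  also have "\<dots> \<le> 2 ^ card K * exp (- 2 * \<epsilon>\<^sup>2 / real (card K)) * ?U'"
    using card_subsets_above_half_le[OF assms(1,2,6)] by (rule mult_right_mono) simp
  also have "\<dots> = real (card (PiE_dflt A False (\<lambda>_. UNIV :: bool set))) * exp (- 2 * \<epsilon>\<^sup>2 / real (card K))"
    by (simp add: total)
  finally show ?thesis .
qed

lemma exists_avoiding_bad_events:
  assumes "finite U" and "U \<noteq> {}" and "finite I" and "finite J"
    and I: "\<And>z. z \<in> I \<Longrightarrow> real (card {c \<in> U. bad z c}) \<le> x * real (card U)"
    and J: "\<And>z. z \<in> J \<Longrightarrow> real (card {c \<in> U. bad' z c}) \<le> y * real (card U)"
    and small: "real (card I) * x + real (card J) * y < 1"
  obtains c where "c \<in> U" and "\<And>z. z \<in> I \<Longrightarrow> \<not> bad z c" and "\<And>z. z \<in> J \<Longrightarrow> \<not> bad' z c"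
proof -
  let ?Bad = "(\<Union>z\<in>I. {c \<in> U. bad z c}) \<union> (\<Union>z\<in>J. {c \<in> U. bad' z c})"
  have "card ?Bad \<le> (\<Sum>z\<in>I. card {c \<in> U. bad z c}) + (\<Sum>z\<in>J. card {c \<in> U. bad' z c})"
    using card_UN_le[OF \<open>finite I\<close>] card_UN_le[OF \<open>finite J\<close>]
    by (intro order_trans[OF card_Un_le add_mono])
  then have "real (card ?Bad)
               \<le> (\<Sum>z\<in>I. real (card {c \<in> U. bad z c})) + (\<Sum>z\<in>J. real (card {c \<in> U. bad' z c}))"
    unfolding of_nat_sum[symmetric] of_nat_add[symmetric] of_nat_le_iff .
  also have "\<dots> \<le> real (card I) * (x * real (card U)) + real (card J) * (y * real (card U))"
    using sum_bounded_above[of I _ "x * real (card U)"] sum_bounded_above[of J _ "y * real (card U)"] I J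
    by (intro add_mono) auto
  also have "\<dots> = real (card U) * (real (card I) * x + real (card J) * y)"
    by (simp add: algebra_simps)
  also have "\<dots> < real (card U) * 1"
    using \<open>finite U\<close> \<open>U \<noteq> {}\<close> by (intro mult_strict_left_mono[OF small]) (simp add: card_gt_0_iff)
  finally have "card ?Bad < card U"
    by simp
  then have "?Bad \<noteq> U"
    by auto
  then obtain c where "c \<in> U" and "c \<notin> ?Bad"
    by blast
  then show ?thesis
    using that by blast
qed

lemma two_le_exp_25_32: "(2::real) \<le> exp (25/32)"
proof -
  have "(2::real) \<le> (1 + (25/32) / real (3::nat)) ^ 3"
    by (simp add: power3_eq_cube)
  also have "\<dots> \<le> exp (25/32)"
    by (rule exp_ge_one_plus_x_over_n_power_n) auto
  finally show ?thesis .
qed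

lemma four_sq_le_exp_div_128:
  assumes "2 * h \<le> 2 ^ (d div 200)"
  shows "4 * real h ^ 2 \<le> exp (real d / 128)"
proof -
  let ?k = "d div 200"
  have "4 * real h ^ 2 = real (2 * h) ^ 2"
    by (simp add: power2_eq_square)
  also have "\<dots> \<le> (2 ^ ?k) ^ 2"
    using assms by (intro power_mono) (metis of_nat_le_iff of_nat_numeral of_nat_power, simp)
  also have "\<dots> = 2 ^ (2 * ?k)"
    by (simp flip: power_mult)
  also have "\<dots> \<le> exp (25/32) ^ (2 * ?k)"
    using two_le_exp_25_32 by (intro power_mono) auto
  also have "\<dots> = exp (real ?k * 25/16)"
    by (simp flip: exp_of_nat_mult)
  also have "\<dots> \<le> exp (real d / 128)"
  proof -
    have "real (d div 200 * 200) \<le> real d"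
      by (simp only: of_nat_le_iff div_times_less_eq_dividend)
    then show ?thesis
      by simp
  qed
  finally show ?thesis .
qed

lemma union_bound_weights_lt_1:
  fixes d h a b :: nat
  assumes "d \<ge> 200" and "2 * h \<le> 2 ^ (d div 200)" and "a \<le> 2 * d * d" and "b \<le> 2 * h * h"
  shows "real a * (1 / real d ^ 8) + real b * exp (- (real d / 128)) < 1"
proof -
  have "real a * (1 / real d ^ 8) \<le> real (2 * d * d) * (1 / real d ^ 8)"
    using assms(3) by (intro mult_right_mono) (simp only: of_nat_le_iff, simp)
  also have "\<dots> = 2 / real d ^ 6"
    using assms(1) by (simp add: field_simps eval_nat_numeral)
  also have "\<dots> \<le> 1/4"
    using power_mono[of 200 "real d" 6] assms(1) by (simp add: field_simps)
  finally have rows: "real a * (1 / real d ^ 8) \<le> 1/4" .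
  have "real b * exp (- (real d / 128)) \<le> real (2 * h * h) * exp (- (real d / 128))"
    using assms(4) by (intro mult_right_mono) (simp only: of_nat_le_iff, simp)
  also have "\<dots> = 4 * real h ^ 2 / 2 * exp (- (real d / 128))"
    by (simp add: power2_eq_square)
  also have "\<dots> \<le> exp (real d / 128) / 2 * exp (- (real d / 128))"
    using four_sq_le_exp_div_128[OF assms(2)] by (intro mult_right_mono) auto
  also have "\<dots> = 1/2"
    by (simp add: exp_minus)
  finally show ?thesis
    using rows by linarith
qed

lemma exp_tail_exponent_rows:
  assumes "d \<ge> 1" and "h \<ge> 1"
  shows "exp (- 2 * (sqrt (2 * ln (real d) / real (2 * h)) * real (2 * h))\<^sup>2 / real h) = 1 / real d ^ 8"
proof -
  have "(sqrt (2 * ln (real d) / real (2 * h)) * real (2 * h))\<^sup>2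
          = 2 * ln (real d) / real (2 * h) * real (2 * h) ^ 2"
    using assms by (simp add: power_mult_distrib)
  also have "\<dots> = 4 * real h * ln (real d)"
    using assms by (simp add: power2_eq_square)
  finally have "exp (- 2 * (sqrt (2 * ln (real d) / real (2 * h)) * real (2 * h))\<^sup>2 / real h)
                  = exp (- (8 * ln (real d)))"
    using assms by simp
  also have "\<dots> = 1 / real d ^ 8"
    using exp_of_nat_mult[of 8 "ln (real d)"] assms by (simp add: exp_minus divide_inverse)
  finally show ?thesis .
qed

lemma card_row_agreement_tail_le:
  fixes d h :: nat
  assumes "i < d" and "j < d" and "i \<noteq> j" and "h \<ge> 1"
  defines "U \<equiv> PiE_dflt ({..<d} \<times> {..<h}) False (\<lambda>_. UNIV :: bool set)"
  shows "real (card {c \<in> U. real h / 2 + sqrt (2 * ln (real d) / real (2 * h)) * real (2 * h)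
                               \<le> real (card {m\<in>{..<h}. c (i, m) = (c (j, m) = e)})})
           \<le> 1 / real d ^ 8 * real (card U)"
  using card_agreement_tail_le[of "{..<h}" "\<lambda>m. (i, m)" "{..<d} \<times> {..<h}" "\<lambda>m. (j, m)"
      "sqrt (2 * ln (real d) / real (2 * h)) * real (2 * h)" e]
    exp_tail_exponent_rows[of d h] assms
  by (auto simp: U_def inj_on_def lessThan_empty_iff mult.commute)

lemma card_column_agreement_tail_le:
  fixes d h :: nat
  assumes "m < h" and "m' < h" and "m \<noteq> m'" and "d \<ge> 1"
  defines "U \<equiv> PiE_dflt ({..<d} \<times> {..<h}) False (\<lambda>_. UNIV :: bool set)"
  shows "real (card {c \<in> U. real d / 2 + real d / 16 \<le> real (card {i\<in>{..<d}. c (i, m) = (c (i, m') = e)})})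
           \<le> exp (- (real d / 128)) * real (card U)"
proof -
  have exponent: "- 2 * (real d / 16)\<^sup>2 / real (card {..<d}) = - (real d / 128)"
    using assms(4) by (simp add: power2_eq_square)
  show ?thesis
    using card_agreement_tail_le[of "{..<d}" "\<lambda>i. (i, m)" "{..<d} \<times> {..<h}" "\<lambda>i. (i, m')"
        "real d / 16" e, unfolded exponent] assms
    by (auto simp: U_def inj_on_def lessThan_empty_iff mult.commute)
qed

lemma exists_balanced_colouring:
  fixes d h :: nat
  assumes "d \<ge> 200" and "h \<ge> 1" and "2 * h \<le> 2 ^ (d div 200)"
  defines "\<alpha> \<equiv> sqrt (2 * ln (real d) / real (2 * h))"
  obtains c :: "nat \<times> nat \<Rightarrow> bool" where
    "\<And>i j e. i < d \<Longrightarrow> j < d \<Longrightarrow> i \<noteq> j \<Longrightarrow>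
       real (card {m\<in>{..<h}. c (i, m) = (c (j, m) = e)}) \<le> (1/4 + \<alpha>) * real (2 * h)"
    and "\<And>m m' e. m < h \<Longrightarrow> m' < h \<Longrightarrow> m \<noteq> m' \<Longrightarrow>
       real (card {i\<in>{..<d}. c (i, m) = (c (i, m') = e)}) \<le> (1/2 + 1/16) * real d"
proof -
  define U where "U = PiE_dflt ({..<d} \<times> {..<h}) False (\<lambda>_. UNIV :: bool set)"
  define I where "I = {(i, j, e :: bool). i < d \<and> j < d \<and> i \<noteq> j}"
  define J where "J = {(m, m', e :: bool). m < h \<and> m' < h \<and> m \<noteq> m'}"
  define row_bad where "row_bad = (\<lambda>(i :: nat, j, e) c.
    real h / 2 + \<alpha> * real (2 * h) \<le> real (card {m\<in>{..<h}. c (i, m) = (c (j, m) = e)}))"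
  define column_bad where "column_bad = (\<lambda>(m :: nat, m', e) c.
    real d / 2 + real d / 16 \<le> real (card {i\<in>{..<d}. c (i, m) = (c (i, m') = e)}))"
  have "finite U"
    unfolding U_def by (intro finite_PiE_dflt) auto
  have "U \<noteq> {}"
    using U_def PiE_dflt_def by fastforce
  have I_sub: "I \<subseteq> {..<d} \<times> {..<d} \<times> UNIV" and J_sub: "J \<subseteq> {..<h} \<times> {..<h} \<times> UNIV"
    by (auto simp: I_def J_def)
  then have "finite I" and "finite J"
    by (auto intro: finite_subset)
  have "card I \<le> 2 * d * d" and "card J \<le> 2 * h * h"
    using card_mono[OF _ I_sub] card_mono[OF _ J_sub] by (simp_all add: card_cartesian_product)
  then have small: "real (card I) * (1 / real d ^ 8) + real (card J) * exp (- (real d / 128)) < 1"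
    using union_bound_weights_lt_1[OF assms(1,3)] by blast
  have rows: "real (card {c \<in> U. row_bad z c}) \<le> 1 / real d ^ 8 * real (card U)" if "z \<in> I" for z
    using that card_row_agreement_tail_le[OF _ _ _ assms(2)]
    by (auto simp: I_def U_def row_bad_def \<alpha>_def)
  have columns: "real (card {c \<in> U. column_bad z c}) \<le> exp (- (real d / 128)) * real (card U)"
    if "z \<in> J" for z
    using that card_column_agreement_tail_le[of _ h _ d] assms(1)
    by (auto simp: J_def U_def column_bad_def)
  obtain c where "c \<in> U" and good_rows: "\<And>z. z \<in> I \<Longrightarrow> \<not> row_bad z c"
    and good_columns: "\<And>z. z \<in> J \<Longrightarrow> \<not> column_bad z c"
    using exists_avoiding_bad_events[OF \<open>finite U\<close> \<open>U \<noteq> {}\<close> \<open>finite I\<close> \<open>finite J\<close>,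
        where bad = row_bad and bad' = column_bad] rows columns small
    by blast
  show ?thesis
  proof (rule that)
    show "real (card {m\<in>{..<h}. c (i, m) = (c (j, m) = e)}) \<le> (1/4 + \<alpha>) * real (2 * h)"
      if "i < d" "j < d" "i \<noteq> j" for i j e
      using good_rows[of "(i, j, e)"] that by (auto simp: I_def row_bad_def algebra_simps)
    show "real (card {i\<in>{..<d}. c (i, m) = (c (i, m') = e)}) \<le> (1/2 + 1/16) * real d"
      if "m < h" "m' < h" "m \<noteq> m'" for m m' e
      using good_columns[of "(m, m', e)"] that by (auto simp: J_def column_bad_def)
  qed
qed

lemma card_div2_filter:
  fixes Q :: "nat \<Rightarrow> bool \<Rightarrow> bool"
  assumes "\<And>m. \<not> (Q m True \<and> Q m False)"
  shows "card {x\<in>{..<2 * h}. Q (x div 2) (even x)} = card {m\<in>{..<h}. Q m True \<or> Q m False}"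
proof -
  let ?S = "{x\<in>{..<2 * h}. Q (x div 2) (even x)}"
  have inj: "inj_on (\<lambda>x. x div 2) ?S"
  proof
    fix x y assume x: "x \<in> ?S" and y: "y \<in> ?S" and div_eq: "x div 2 = y div 2"
    have "even x = even y"
      using x y div_eq assms by (cases "even x"; cases "even y") fastforce+
    then have "x mod 2 = y mod 2"
      by (metis even_iff_mod_2_eq_zero odd_iff_mod_2_eq_one)
    with div_eq show "x = y"
      by (metis div_mult_mod_eq)
  qed
  have img: "(\<lambda>x. x div 2) ` ?S = {m\<in>{..<h}. Q m True \<or> Q m False}"
  proof (intro equalityI subsetI)
    fix m assume "m \<in> (\<lambda>x. x div 2) ` ?S"
    then obtain x where "x \<in> ?S" and "m = x div 2"
      by blast
    then show "m \<in> {m\<in>{..<h}. Q m True \<or> Q m False}"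
      by (cases "even x") auto
  next
    fix m assume m: "m \<in> {m\<in>{..<h}. Q m True \<or> Q m False}"
    show "m \<in> (\<lambda>x. x div 2) ` ?S"
    proof (cases "Q m True")
      case True
      with m have "2 * m \<in> ?S" by auto
      then show ?thesis by (rule rev_image_eqI) simp
    next
      case False
      with m have "2 * m + 1 \<in> ?S" by auto
      then show ?thesis by (rule rev_image_eqI) simp
    qed
  qed
  show ?thesis
    using card_image[OF inj] img by simp
qed

definition pair_side :: "(nat \<times> nat \<Rightarrow> bool) \<Rightarrow> nat \<Rightarrow> nat \<Rightarrow> bool \<Rightarrow> nat set" where
  "pair_side c n i l = {x\<in>{..<n}. (c (i, x div 2) = even x) \<noteq> l}"

definition pair_bipartitions ::
  "(nat \<times> nat \<Rightarrow> bool) \<Rightarrow> nat \<Rightarrow> nat \<Rightarrow> (nat set \<times> nat set) list" where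
  "pair_bipartitions c n d = map (\<lambda>i. (pair_side c n i False, pair_side c n i True)) [0..<d]"

lemma part_pair_bipartitions:
  "i < d \<Longrightarrow> Defs.part (pair_bipartitions c n d ! i) l = pair_side c n i l"
  by (cases l) (simp_all add: pair_bipartitions_def Defs.part_def)

lemma card_pair_side_inter:
  "card (pair_side c (2 * h) i l \<inter> pair_side c (2 * h) j l') =
     card {m\<in>{..<h}. c (i, m) = (c (j, m) = (l = l'))}"
proof -
  define Q where "Q = (\<lambda>m b. (c (i, m) = b) \<noteq> l \<and> (c (j, m) = b) \<noteq> l')"
  have "pair_side c (2 * h) i l \<inter> pair_side c (2 * h) j l' = {x\<in>{..<2 * h}. Q (x div 2) (even x)}"
    by (auto simp: pair_side_def Q_def)
  also have "card \<dots> = card {m\<in>{..<h}. Q m True \<or> Q m False}"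
    by (rule card_div2_filter) (auto simp: Q_def)
  also have "{m\<in>{..<h}. Q m True \<or> Q m False} = {m\<in>{..<h}. c (i, m) = (c (j, m) = (l = l'))}"
    by (auto simp: Q_def)
  finally show ?thesis .
qed

lemma card_pair_side: "card (pair_side c (2 * h) i l) = h"
  using card_pair_side_inter[of c h i l i l] by simp

lemma pair_bipartitions_equitable:
  "P \<in> set (pair_bipartitions c (2 * h) d) \<Longrightarrow> equitable_bipartition {..<2 * h} P"
  by (auto simp: pair_bipartitions_def equitable_bipartition_def card_pair_side)
     (auto simp: pair_side_def)

lemma pair_bipartitions_orthogonal:
  assumes "\<And>i j e. i < j \<Longrightarrow> j < d \<Longrightarrow>
             real (card {m\<in>{..<h}. c (i, m) = (c (j, m) = e)}) \<le> (1/4 + \<alpha>) * real (2 * h)"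
  shows "alpha_orthogonal {..<2 * h} (pair_bipartitions c (2 * h) d) \<alpha>"
  unfolding alpha_orthogonal_def
proof (intro allI impI)
  fix i j l l' assume "i < j \<and> j < length (pair_bipartitions c (2 * h) d)"
  then have "i < j" "j < d"
    by (simp_all add: pair_bipartitions_def)
  then show "real (card (Defs.part (pair_bipartitions c (2 * h) d ! i) l
                         \<inter> Defs.part (pair_bipartitions c (2 * h) d ! j) l'))
             \<le> (1/4 + \<alpha>) * real (card {..<2 * h})"
    using assms by (simp add: part_pair_bipartitions card_pair_side_inter)
qed

lemma pair_bipartitions_balanced:
  assumes "\<beta> \<ge> -1/2"
    and "\<And>m m' e. m < h \<Longrightarrow> m' < h \<Longrightarrow> m \<noteq> m' \<Longrightarrow>
           real (card {i\<in>{..<d}. c (i, m) = (c (i, m') = e)}) \<le> (1/2 + \<beta>) * real d"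
  shows "beta_balanced {..<2 * h} (pair_bipartitions c (2 * h) d) \<beta>"
  unfolding beta_balanced_def
proof (intro ballI impI)
  fix x y assume x: "x \<in> {..<2 * h}" and y: "y \<in> {..<2 * h}" and "x \<noteq> y"
  let ?B = "pair_bipartitions c (2 * h) d"
  have together: "{i. i < length ?B \<and> (x \<in> fst (?B ! i) \<and> y \<in> fst (?B ! i) \<or>
                                     x \<in> snd (?B ! i) \<and> y \<in> snd (?B ! i))}
      = {i\<in>{..<d}. c (i, x div 2) = (c (i, y div 2) = (even x = even y))}"
    using x y by (auto simp: pair_bipartitions_def pair_side_def)
  show "real (card {i. i < length ?B \<and> (x \<in> fst (?B ! i) \<and> y \<in> fst (?B ! i) \<or>
                                      x \<in> snd (?B ! i) \<and> y \<in> snd (?B ! i))})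
        \<le> (1/2 + \<beta>) * real (length ?B)"
  proof (cases "x div 2 = y div 2")
    case True
    with \<open>x \<noteq> y\<close> have "even x \<noteq> even y"
      by (metis div_mult_mod_eq even_iff_mod_2_eq_zero odd_iff_mod_2_eq_one)
    with True assms(1) show ?thesis
      unfolding together by (simp add: pair_bipartitions_def)
  next
    case False
    with x y show ?thesis
      using assms(2)[of "x div 2" "y div 2"] unfolding together by (simp add: pair_bipartitions_def)
  qed
qed

theorem lemma5p1:
  fixes d n :: nat
  assumes "d \<ge> 200" and "even n" and "n \<le> 2 ^ (d div 200)"
  shows "\<exists>(X :: nat set) B. ndab_sequence X B n d (sqrt (2 * ln (real d) / real n)) (1/16)"
proof (cases "n = 0")
  case True
  then have "ndab_sequence ({} :: nat set) (replicate d ({}, {})) n d (sqrt (2 * ln (real d) / real n)) (1/16)"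
    by (auto simp: ndab_sequence_def equitable_bipartition_def alpha_orthogonal_def
        beta_balanced_def Defs.part_def)
  then show ?thesis
    by blast
next
  case False
  with \<open>even n\<close> obtain h where n: "n = 2 * h" and "h \<ge> 1"
    by (auto elim: evenE)
  obtain c where rows: "\<And>i j e. i < d \<Longrightarrow> j < d \<Longrightarrow> i \<noteq> j \<Longrightarrow>
      real (card {m\<in>{..<h}. c (i, m) = (c (j, m) = e)})
        \<le> (1/4 + sqrt (2 * ln (real d) / real (2 * h))) * real (2 * h)"
    and columns: "\<And>m m' e. m < h \<Longrightarrow> m' < h \<Longrightarrow> m \<noteq> m' \<Longrightarrow>
      real (card {i\<in>{..<d}. c (i, m) = (c (i, m') = e)}) \<le> (1/2 + 1/16) * real d"
    using exists_balanced_colouring[OF \<open>d \<ge> 200\<close> \<open>h \<ge> 1\<close>] assms(3) n by blast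
  have "ndab_sequence {..<2 * h} (pair_bipartitions c (2 * h) d) n d
          (sqrt (2 * ln (real d) / real n)) (1/16)"
    unfolding ndab_sequence_def
    using pair_bipartitions_equitable pair_bipartitions_orthogonal[OF rows]
      pair_bipartitions_balanced[OF _ columns] n
    by (simp add: pair_bipartitions_def)
  then show ?thesis
    by blast
qed

end
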